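(* Let $A,B\in\mathcal{B}(\mathcal{H})$. Then (i) $w(AB\pm BA)\leq w^{1/2}(A^*A+AA^* )\,w^{1/2}(B^*B+BB^* )$; (ii) $w(AB\pm BA)\leq w^{1/2}(A^*A+B^*B)\,w^{1/2}(AA^*+BB^* )$.
   Context: $\mathcal{H}$ is a complex Hilbert space, $\mathcal{B}(\mathcal{H})$ the bounded linear operators on it, and $w(T)=\sup\{|\langle Tx,x\rangle|:\|x\|=1\}$ the numerical radius. *)

theory Defs
  imports "HOL-Analysis.Analysis"
begin

text \<open>The distribution
  only provides real inner product spaces, so we add complex scalar
  multiplication and a complex inner product on top of a real normed vector space.\<close>

class complex_inner_space = real_normed_vector +
  fixes scaleC :: "complex \<Rightarrow> 'a \<Rightarrow> 'a"
    and cinner :: "'a \<Rightarrow> 'a \<Rightarrow> complex"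
  assumes scaleC_add_right: "scaleC a (x + y) = scaleC a x + scaleC a y"
    and scaleC_add_left: "scaleC (a + b) x = scaleC a x + scaleC b x"
    and scaleC_scaleC: "scaleC a (scaleC b x) = scaleC (a * b) x"
    and scaleC_one: "scaleC 1 x = x"
    and scaleR_scaleC: "scaleR r x = scaleC (complex_of_real r) x"
    and cinner_commute: "cinner x y = cnj (cinner y x)"
    and cinner_add_left: "cinner (x + y) z = cinner x z + cinner y z"
    and cinner_scaleC_left: "cinner (scaleC a x) y = a * cinner x y"
    and cinner_self_real: "Im (cinner x x) = 0"
    and cinner_self_nonneg: "0 \<le> Re (cinner x x)"
    and cinner_self_eq_0: "cinner x x = 0 \<longleftrightarrow> x = 0"
    and norm_eq_sqrt_cinner: "norm x = sqrt (Re (cinner x x))"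

class chilbert_space = complex_inner_space + complete_space

definition bounded_clinear :: "('a::complex_inner_space \<Rightarrow> 'a) \<Rightarrow> bool" where
  "bounded_clinear T \<longleftrightarrow> bounded_linear T \<and> (\<forall>c x. T (scaleC c x) = scaleC c (T x))"

definition is_adjoint :: "('a::complex_inner_space \<Rightarrow> 'a) \<Rightarrow> ('a \<Rightarrow> 'a) \<Rightarrow> bool" where
  "is_adjoint T S \<longleftrightarrow> (\<forall>x y. cinner (T x) y = cinner x (S y))"

definition numrad :: "('a::complex_inner_space \<Rightarrow> 'a) \<Rightarrow> real" where
  "numrad T = Sup {cmod (cinner (T x) x) | x. norm x = 1}"

end

(*
  For a unit vector x, moving A and B across the inner product gives
  <(AB +- BA)x, x> = <Bx, A*x> +- <Ax, B*x>, so by Cauchy-Schwarz its modulus is at most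
  |Bx| |A*x| + |Ax| |B*x|.  Cauchy-Schwarz in the plane bounds this by
  sqrt(|Ax|^2 + |A*x|^2) sqrt(|Bx|^2 + |B*x|^2), and also, pairing the terms differently, by
  sqrt(|Ax|^2 + |Bx|^2) sqrt(|A*x|^2 + |B*x|^2).  Each of these sums of squares is the
  quadratic form of one of the positive operators A*A + AA*, B*B + BB*, A*A + B*B, AA* + BB*
  at x, hence at most its numerical radius.
*)
theory Submission
  imports Defs
begin

lemma cinner_zero_left [simp]: "cinner 0 y = 0"
  for y :: "'a::complex_inner_space"
  using cinner_add_left[of 0 0 y] by simp

lemma cinner_minus_left: "cinner (- x) y = - cinner x y"
  for x :: "'a::complex_inner_space"
  using cinner_add_left[of x "- x" y] by (simp add: eq_neg_iff_add_eq_0 add.commute)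

lemma cinner_diff_left: "cinner (x - y) z = cinner x z - cinner y z"
  for x :: "'a::complex_inner_space"
  unfolding diff_conv_add_uminus cinner_add_left cinner_minus_left by simp

lemma cinner_add_right: "cinner x (y + z) = cinner x y + cinner x z"
  for x :: "'a::complex_inner_space"
  by (metis cinner_commute cinner_add_left complex_cnj_add)

lemma cinner_diff_right: "cinner x (y - z) = cinner x y - cinner x z"
  for x :: "'a::complex_inner_space"
  by (metis cinner_commute cinner_diff_left complex_cnj_diff)

lemma cinner_scaleC_right: "cinner x (scaleC a y) = cnj a * cinner x y"
  for x :: "'a::complex_inner_space"
  by (metis cinner_commute cinner_scaleC_left complex_cnj_mult complex_cnj_cnj)

lemma cinner_self_eq_norm_power2: "cinner x x = of_real ((norm x)\<^sup>2)"
  for x :: "'a::complex_inner_space"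
  using cinner_self_nonneg[of x] cinner_self_real[of x]
  by (simp add: norm_eq_sqrt_cinner complex_eq_iff)

lemma cinner_right_cancel:
  fixes x y :: "'a::complex_inner_space"
  assumes "\<And>u. cinner u x = cinner u y"
  shows "x = y"
proof -
  have "cinner (x - y) (x - y) = 0"
    using assms[of "x - y"] by (simp add: cinner_diff_right)
  then show ?thesis by (simp add: cinner_self_eq_0)
qed

lemma cmod_cinner_le: "cmod (cinner x y) \<le> norm x * norm y"
  for x y :: "'a::complex_inner_space"
proof (cases "y = 0")
  case True
  then show ?thesis by (simp add: cinner_commute[of x 0])
next
  case False
  \<comment> \<open>expand 0 \<le> |x - t y|^2 at the minimizing t = <x, y> / |y|^2\<close>
  define c where "c = cinner x y"
  define n where "n = (norm y)\<^sup>2"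
  define t where "t = c / of_real n"
  have "n > 0" using False by (simp add: n_def)
  have "0 \<le> Re (cinner (x - scaleC t y) (x - scaleC t y))"
    by (rule cinner_self_nonneg)
  also have "cinner (x - scaleC t y) (x - scaleC t y)
      = of_real ((norm x)\<^sup>2) - cnj t * c - t * cnj c + t * cnj t * of_real n"
    unfolding cinner_diff_left cinner_diff_right cinner_scaleC_left cinner_scaleC_right
    by (simp add: cinner_self_eq_norm_power2 cinner_commute[of y x] flip: c_def n_def)
      (simp add: algebra_simps)
  also have "\<dots> = of_real ((norm x)\<^sup>2 - (cmod c)\<^sup>2 / n)"
    using \<open>n > 0\<close> unfolding t_def
    by (simp add: field_simps complex_mult_cnj cmod_power2 flip: of_real_mult of_real_power)
  finally have "(cmod c)\<^sup>2 \<le> (norm x * norm y)\<^sup>2"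
    using \<open>n > 0\<close> by (simp add: n_def field_simps power_mult_distrib)
  then show ?thesis
    unfolding c_def by (rule power2_le_imp_le) simp
qed

lemma is_adjoint_sym: "is_adjoint T S \<Longrightarrow> is_adjoint S T"
  unfolding is_adjoint_def by (metis cinner_commute)

lemma cinner_adjoint_comp_self:
  "is_adjoint T S \<Longrightarrow> cinner (S (T x)) x = of_real ((norm (T x))\<^sup>2)"
  by (metis is_adjoint_def is_adjoint_sym cinner_self_eq_norm_power2)

lemma norm_adjoint_le:
  fixes T S :: "'a::complex_inner_space \<Rightarrow> 'a"
  assumes "is_adjoint T S" and bound: "\<And>x. norm (T x) \<le> norm x * K"
  shows "norm (S x) \<le> norm x * K"
proof (cases "S x = 0")
  case True
  then show ?thesis
    using bound[of x] by (metis norm_ge_zero norm_zero order_trans)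
next
  case False
  have "(norm (S x))\<^sup>2 = Re (cinner (T (S x)) x)"
    using cinner_adjoint_comp_self[OF is_adjoint_sym[OF assms(1)]] by simp
  also have "\<dots> \<le> norm (T (S x)) * norm x"
    using complex_Re_le_cmod cmod_cinner_le order_trans by blast
  also have "\<dots> \<le> norm (S x) * K * norm x"
    using bound[of "S x"] by (simp add: mult_right_mono)
  finally show ?thesis
    using False by (simp add: power2_eq_square algebra_simps)
qed

lemma bounded_linear_adjoint:
  fixes T S :: "'a::complex_inner_space \<Rightarrow> 'a"
  assumes "bounded_linear T" and "is_adjoint T S"
  shows "bounded_linear S"
proof -
  have adj: "cinner u (S v) = cinner (T u) v" for u v
    using assms(2) by (simp add: is_adjoint_def)
  obtain K where "\<And>x. norm (T x) \<le> norm x * K"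
    using bounded_linear.bounded[OF assms(1)] by blast
  show ?thesis
  proof (rule bounded_linear_intro)
    show "S (x + y) = S x + S y" for x y
      by (rule cinner_right_cancel) (simp add: adj cinner_add_right)
    show "S (scaleR r x) = scaleR r (S x)" for r x
      by (rule cinner_right_cancel) (simp add: adj scaleR_scaleC cinner_scaleC_right)
    show "norm (S x) \<le> norm x * K" for x
      by (rule norm_adjoint_le) fact+
  qed
qed

lemma cmod_cinner_adjoint_sum:
  assumes "is_adjoint A As" and "is_adjoint B Bs"
  shows "cmod (cinner (As (A x) + Bs (B x)) x) = (norm (A x))\<^sup>2 + (norm (B x))\<^sup>2"
  by (simp add: cinner_add_left cinner_adjoint_comp_self[OF assms(1)]
      cinner_adjoint_comp_self[OF assms(2)] flip: of_real_add of_real_power)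

lemma bdd_above_cinner_adjoint_sum:
  fixes A B As Bs :: "'a::complex_inner_space \<Rightarrow> 'a"
  assumes "bounded_linear A" and "bounded_linear B"
    and "is_adjoint A As" and "is_adjoint B Bs"
  shows "bdd_above {cmod (cinner (As (A x) + Bs (B x)) x) | x. norm x = 1}"
proof -
  obtain KA KB
    where KA: "\<And>x. norm (A x) \<le> norm x * KA" and KB: "\<And>x. norm (B x) \<le> norm x * KB"
    using bounded_linear.bounded[OF assms(1)] bounded_linear.bounded[OF assms(2)] by metis
  have "(norm (A x))\<^sup>2 + (norm (B x))\<^sup>2 \<le> KA\<^sup>2 + KB\<^sup>2" if "norm x = 1" for x
    using KA[of x] KB[of x] that by (intro add_mono power_mono) auto
  then show ?thesis
    by (auto simp: bdd_above_def cmod_cinner_adjoint_sum[OF assms(3,4)])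
qed

lemma cmod_cinner_commutator_le:
  assumes "is_adjoint A As" and "is_adjoint B Bs"
  shows "cmod (cinner (A (B x) + B (A x)) x)
           \<le> norm (B x) * norm (As x) + norm (A x) * norm (Bs x)"
    and "cmod (cinner (A (B x) - B (A x)) x)
           \<le> norm (B x) * norm (As x) + norm (A x) * norm (Bs x)"
proof -
  let ?u = "cinner (B x) (As x)" and ?v = "cinner (A x) (Bs x)"
    and ?bound = "norm (B x) * norm (As x) + norm (A x) * norm (Bs x)"
  have "cinner (A (B x) + B (A x)) x = ?u + ?v" and "cinner (A (B x) - B (A x)) x = ?u - ?v"
    using assms by (simp_all add: is_adjoint_def cinner_add_left cinner_diff_left)
  moreover have "cmod ?u + cmod ?v \<le> ?bound"
    using cmod_cinner_le[of "B x" "As x"] cmod_cinner_le[of "A x" "Bs x"] by linarith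
  ultimately show "cmod (cinner (A (B x) + B (A x)) x) \<le> ?bound"
    and "cmod (cinner (A (B x) - B (A x)) x) \<le> ?bound"
    using norm_triangle_ineq[of ?u ?v] norm_triangle_ineq4[of ?u ?v] by simp_all
qed

lemma mult_add_mult_le_sqrt_sum_squares:
  fixes a b c d :: real
  shows "a * c + b * d \<le> sqrt (a\<^sup>2 + b\<^sup>2) * sqrt (c\<^sup>2 + d\<^sup>2)"
proof -
  have "(a * c + b * d)\<^sup>2 \<le> (a\<^sup>2 + b\<^sup>2) * (c\<^sup>2 + d\<^sup>2)"
    using zero_le_power2[of "a * d - b * c"] by (simp add: power2_eq_square algebra_simps)
  then show ?thesis
    by (simp add: real_le_rsqrt flip: real_sqrt_mult)
qed

lemma numrad_le_sqrt_mult: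
  fixes T P Q :: "'a::complex_inner_space \<Rightarrow> 'a"
  assumes "bdd_above {cmod (cinner (P x) x) | x. norm x = 1}"
    and "bdd_above {cmod (cinner (Q x) x) | x. norm x = 1}"
    and bound: "\<And>x. norm x = 1 \<Longrightarrow>
      cmod (cinner (T x) x) \<le> sqrt (cmod (cinner (P x) x)) * sqrt (cmod (cinner (Q x) x))"
  shows "numrad T \<le> sqrt (numrad P) * sqrt (numrad Q)"
proof (cases "\<exists>x::'a. norm x = 1")
  case False
  \<comment> \<open>on the zero space every numerical radius is the junk value Sup {},
    and s \<le> sqrt s * sqrt s holds for every real s\<close>
  then have "numrad T = Sup {}" and "numrad P = Sup {}" and "numrad Q = Sup {}"
    by (simp_all add: numrad_def)
  then show ?thesis
    by (metis abs_ge_self real_sqrt_abs2 real_sqrt_mult)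
next
  case True
  have "cmod (cinner (T x) x) \<le> sqrt (numrad P) * sqrt (numrad Q)" if "norm x = 1" for x
  proof -
    have "cmod (cinner (P x) x) \<le> numrad P" and "cmod (cinner (Q x) x) \<le> numrad Q"
      unfolding numrad_def using assms(1,2) that by (auto intro: cSup_upper)
    then have "sqrt (cmod (cinner (P x) x)) * sqrt (cmod (cinner (Q x) x))
        \<le> sqrt (numrad P) * sqrt (numrad Q)"
      by (intro mult_mono' real_sqrt_le_mono) auto
    then show ?thesis
      using bound[OF that] by linarith
  qed
  then show ?thesis
    unfolding numrad_def using True by (auto intro: cSup_least)
qed

theorem theorem2p15:
  fixes A B As Bs :: "'a::chilbert_space \<Rightarrow> 'a"
  assumes "bounded_clinear A" and "bounded_clinear B"
    and "is_adjoint A As" and "is_adjoint B Bs"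
  shows "numrad (\<lambda>x. A (B x) + B (A x))
           \<le> sqrt (numrad (\<lambda>x. As (A x) + A (As x))) * sqrt (numrad (\<lambda>x. Bs (B x) + B (Bs x))) \<and>
         numrad (\<lambda>x. A (B x) - B (A x))
           \<le> sqrt (numrad (\<lambda>x. As (A x) + A (As x))) * sqrt (numrad (\<lambda>x. Bs (B x) + B (Bs x))) \<and>
         numrad (\<lambda>x. A (B x) + B (A x))
           \<le> sqrt (numrad (\<lambda>x. As (A x) + Bs (B x))) * sqrt (numrad (\<lambda>x. A (As x) + B (Bs x))) \<and>
         numrad (\<lambda>x. A (B x) - B (A x))
           \<le> sqrt (numrad (\<lambda>x. As (A x) + Bs (B x))) * sqrt (numrad (\<lambda>x. A (As x) + B (Bs x)))"
proof -
  note adj = assms(3,4) is_adjoint_sym[OF assms(3)] is_adjoint_sym[OF assms(4)]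
  have "bounded_linear A" and "bounded_linear B"
    using assms(1,2) by (simp_all add: bounded_clinear_def)
  note bl = this bounded_linear_adjoint[OF this(1) assms(3)]
    bounded_linear_adjoint[OF this(2) assms(4)]
  define cross where "cross x = norm (B x) * norm (As x) + norm (A x) * norm (Bs x)" for x
  have cross_le_i: "cross x \<le> sqrt (cmod (cinner (As (A x) + A (As x)) x))
      * sqrt (cmod (cinner (Bs (B x) + B (Bs x)) x))" for x
    using mult_add_mult_le_sqrt_sum_squares
        [of "norm (A x)" "norm (Bs x)" "norm (As x)" "norm (B x)"]
    unfolding cross_def cmod_cinner_adjoint_sum[OF adj(1,3)] cmod_cinner_adjoint_sum[OF adj(2,4)]
    by (simp add: add.commute mult.commute)
  have cross_le_ii: "cross x \<le> sqrt (cmod (cinner (As (A x) + Bs (B x)) x))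
      * sqrt (cmod (cinner (A (As x) + B (Bs x)) x))" for x
    using mult_add_mult_le_sqrt_sum_squares
        [of "norm (A x)" "norm (Bs x)" "norm (B x)" "norm (As x)"]
    unfolding cross_def cmod_cinner_adjoint_sum[OF adj(1,2)] cmod_cinner_adjoint_sum[OF adj(3,4)]
    by (simp add: add.commute mult.commute)
  have anti: "cmod (cinner (A (B x) + B (A x)) x) \<le> cross x"
    and comm: "cmod (cinner (A (B x) - B (A x)) x) \<le> cross x" for x
    unfolding cross_def by (rule cmod_cinner_commutator_le[OF adj(1,2)])+
  note bdd_i = bdd_above_cinner_adjoint_sum[OF bl(1,3) adj(1,3)]
    bdd_above_cinner_adjoint_sum[OF bl(2,4) adj(2,4)]
  note bdd_ii = bdd_above_cinner_adjoint_sum[OF bl(1,2) adj(1,2)]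
    bdd_above_cinner_adjoint_sum[OF bl(3,4) adj(3,4)]
  show ?thesis
    using numrad_le_sqrt_mult[OF bdd_i order_trans[OF anti cross_le_i]]
      numrad_le_sqrt_mult[OF bdd_i order_trans[OF comm cross_le_i]]
      numrad_le_sqrt_mult[OF bdd_ii order_trans[OF anti cross_le_ii]]
      numrad_le_sqrt_mult[OF bdd_ii order_trans[OF comm cross_le_ii]]
    by blast
qed

end
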